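(* Let $(A,\circ)$ be a right normal band. If every two elements $s,t\in A$ have a greatest lower bound $s\wedge t$ with respect to the natural order $\le$, then $(A,\circ,\wedge)$ is a right normal band with intersection. Conversely, if $(A,\circ,\cap)$ is a right normal band with intersection, then $s\cap t$ is the greatest lower bound of $s,t$ with respect to $\le$. Consequently, an algebra $(A,\circ,\cap)$ is a right normal band with intersection if and only if $(A,\circ)$ is a right normal band and for all $x,y,z\in A$: $x=x\circ y$ and $x=x\circ z$ hold if and only if $x=x\circ(y\cap z)$.
   Context: A right normal band is a semigroup $(A,\circ)$ with $x\circ x=x$ and $(x\circ y)\circ z=(y\circ x)\circ z$. Its natural order is $x\le y$ iff $x=x\circ y$. A right normal band with intersection $(A,\circ,\cap)$: $(A,\circ)$ a right normal band, $(A,\cap)$ a semilattice (associative, commutative, idempotent), $(x\cap y)\circ x=x\cap y$ and $x\circ(y\cap z)=(x\circ y)\cap z$ for all $x,y,z$. *)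

theory Defs
  imports Main
begin

definition closed_op :: "'a set \<Rightarrow> ('a \<Rightarrow> 'a \<Rightarrow> 'a) \<Rightarrow> bool" where
  "closed_op A f \<longleftrightarrow> (\<forall>x\<in>A. \<forall>y\<in>A. f x y \<in> A)"

definition right_normal_band :: "'a set \<Rightarrow> ('a \<Rightarrow> 'a \<Rightarrow> 'a) \<Rightarrow> bool" where
  "right_normal_band A f \<longleftrightarrow> closed_op A f
     \<and> (\<forall>x\<in>A. \<forall>y\<in>A. \<forall>z\<in>A. f (f x y) z = f x (f y z))
     \<and> (\<forall>x\<in>A. f x x = x)
     \<and> (\<forall>x\<in>A. \<forall>y\<in>A. \<forall>z\<in>A. f (f x y) z = f (f y x) z)"

definition nat_le :: "('a \<Rightarrow> 'a \<Rightarrow> 'a) \<Rightarrow> 'a \<Rightarrow> 'a \<Rightarrow> bool" where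
  "nat_le f x y \<longleftrightarrow> x = f x y"

definition semilattice_on :: "'a set \<Rightarrow> ('a \<Rightarrow> 'a \<Rightarrow> 'a) \<Rightarrow> bool" where
  "semilattice_on A g \<longleftrightarrow> closed_op A g
     \<and> (\<forall>x\<in>A. \<forall>y\<in>A. \<forall>z\<in>A. g (g x y) z = g x (g y z))
     \<and> (\<forall>x\<in>A. \<forall>y\<in>A. g x y = g y x)
     \<and> (\<forall>x\<in>A. g x x = x)"

definition rnb_with_intersection :: "'a set \<Rightarrow> ('a \<Rightarrow> 'a \<Rightarrow> 'a) \<Rightarrow> ('a \<Rightarrow> 'a \<Rightarrow> 'a) \<Rightarrow> bool" where
  "rnb_with_intersection A f g \<longleftrightarrow> right_normal_band A f \<and> semilattice_on A g
     \<and> (\<forall>x\<in>A. \<forall>y\<in>A. f (g x y) x = g x y)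
     \<and> (\<forall>x\<in>A. \<forall>y\<in>A. \<forall>z\<in>A. f x (g y z) = g (f x y) z)"

definition is_glb :: "'a set \<Rightarrow> ('a \<Rightarrow> 'a \<Rightarrow> 'a) \<Rightarrow> 'a \<Rightarrow> 'a \<Rightarrow> 'a \<Rightarrow> bool" where
  "is_glb A f m s t \<longleftrightarrow> m \<in> A \<and> nat_le f m s \<and> nat_le f m t
     \<and> (\<forall>x\<in>A. nat_le f x s \<and> nat_le f x t \<longrightarrow> nat_le f x m)"

end

theory Submission
  imports Defs
begin

text \<open>In a right normal band the natural order is a partial order in which left multiplication
  is monotone, x \<circ> y \<le> y, and x \<circ> w = w whenever w \<le> x \<circ> y. Hence x \<circ> (y \<and> z) and
  (x \<circ> y) \<and> z have the same lower bounds, which is the intersection axiom; the semilattice laws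
  hold for meets in any partial order. Conversely, the intersection axioms force w \<inter> t = w for
  w \<le> t, so every common lower bound w of s and t satisfies
  w \<circ> (s \<inter> t) = (w \<circ> s) \<inter> t = w \<inter> t = w.\<close>

locale rn_band =
  fixes A :: "'a set" and mult :: "'a \<Rightarrow> 'a \<Rightarrow> 'a" (infixl "\<cdot>" 70)
  assumes right_normal_band: "right_normal_band A (\<cdot>)"
begin

abbreviation natural_le :: "'a \<Rightarrow> 'a \<Rightarrow> bool" (infix "\<preceq>" 50) where
  "x \<preceq> y \<equiv> nat_le (\<cdot>) x y"

lemma closed: "x \<in> A \<Longrightarrow> y \<in> A \<Longrightarrow> x \<cdot> y \<in> A"
  and assoc: "x \<in> A \<Longrightarrow> y \<in> A \<Longrightarrow> z \<in> A \<Longrightarrow> x \<cdot> y \<cdot> z = x \<cdot> (y \<cdot> z)"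
  and idem: "x \<in> A \<Longrightarrow> x \<cdot> x = x"
  and right_normal: "x \<in> A \<Longrightarrow> y \<in> A \<Longrightarrow> z \<in> A \<Longrightarrow> x \<cdot> y \<cdot> z = y \<cdot> x \<cdot> z"
  using right_normal_band unfolding right_normal_band_def closed_op_def by blast+

lemma mult_mult_self_right: "x \<in> A \<Longrightarrow> y \<in> A \<Longrightarrow> x \<cdot> y \<cdot> x = y \<cdot> x"
  using right_normal[of x y x] assoc[of y x x] idem[of x] by simp

lemma mult_eq_if_nat_le: "x \<preceq> y \<Longrightarrow> x \<cdot> y = x"
  unfolding nat_le_def by (rule sym)

lemma nat_le_refl: "x \<in> A \<Longrightarrow> x \<preceq> x"
  by (simp add: nat_le_def idem)

lemma nat_le_trans:
  assumes "x \<in> A" "y \<in> A" "z \<in> A" "x \<preceq> y" "y \<preceq> z"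
  shows "x \<preceq> z"
  using assms by (metis nat_le_def assoc)

lemma nat_le_antisym:
  assumes "x \<in> A" "y \<in> A" "x \<preceq> y" "y \<preceq> x"
  shows "x = y"
  using assms mult_mult_self_right[of x y] idem by (simp add: nat_le_def)

lemma eq_if_same_lower_bounds:
  assumes "a \<in> A" "b \<in> A" "\<And>w. w \<in> A \<Longrightarrow> w \<preceq> a \<longleftrightarrow> w \<preceq> b"
  shows "a = b"
  using assms nat_le_refl nat_le_antisym by blast

lemma mult_nat_le_right: "x \<in> A \<Longrightarrow> y \<in> A \<Longrightarrow> x \<cdot> y \<preceq> y"
  by (simp add: nat_le_def assoc idem)

lemma mult_left_mono:
  assumes "x \<in> A" "y \<in> A" "z \<in> A" "y \<preceq> z"
  shows "x \<cdot> y \<preceq> x \<cdot> z"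
proof -
  have "x \<cdot> y \<cdot> (x \<cdot> z) = x \<cdot> y \<cdot> x \<cdot> z" using assms(1-3) by (simp add: closed assoc)
  also have "\<dots> = y \<cdot> x \<cdot> z" using assms(1,2) by (simp add: mult_mult_self_right)
  also have "\<dots> = x \<cdot> (y \<cdot> z)" using assms(1-3) by (simp add: right_normal assoc)
  also have "\<dots> = x \<cdot> y" using mult_eq_if_nat_le[OF assms(4)] by simp
  finally show ?thesis by (simp add: nat_le_def)
qed

lemma mult_left_fixes_lower_bound:
  assumes "w \<in> A" "x \<in> A" "y \<in> A" "w \<preceq> x \<cdot> y"
  shows "x \<cdot> w = w"
proof -
  have w: "w = w \<cdot> x \<cdot> y" using assms by (simp add: nat_le_def assoc)
  have "x \<cdot> w = x \<cdot> w \<cdot> x \<cdot> y" using assms(1-3) w by (metis closed assoc)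
  also have "\<dots> = w" using assms(1,2) w by (simp add: mult_mult_self_right)
  finally show ?thesis .
qed

lemma is_glb_iff:
  assumes "m \<in> A" "s \<in> A" "t \<in> A"
  shows "is_glb A (\<cdot>) m s t \<longleftrightarrow> (\<forall>w\<in>A. w \<preceq> m \<longleftrightarrow> w \<preceq> s \<and> w \<preceq> t)"
  using assms nat_le_refl nat_le_trans unfolding is_glb_def by meson

lemma all_glb_iff_lower_bounds:
  assumes "closed_op A g"
  shows "(\<forall>s\<in>A. \<forall>t\<in>A. is_glb A (\<cdot>) (g s t) s t)
    \<longleftrightarrow> (\<forall>x\<in>A. \<forall>y\<in>A. \<forall>z\<in>A. x \<preceq> y \<and> x \<preceq> z \<longleftrightarrow> x \<preceq> g y z)"
  using assms unfolding closed_op_def by (simp add: is_glb_iff) blast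

context
  fixes meet :: "'a \<Rightarrow> 'a \<Rightarrow> 'a" (infixl "\<sqinter>" 65)
  assumes is_glb_meet: "\<forall>s\<in>A. \<forall>t\<in>A. is_glb A (\<cdot>) (s \<sqinter> t) s t"
begin

lemma meet_closed: "s \<in> A \<Longrightarrow> t \<in> A \<Longrightarrow> s \<sqinter> t \<in> A"
  using is_glb_meet unfolding is_glb_def by blast

lemma nat_le_meet_iff: "w \<in> A \<Longrightarrow> s \<in> A \<Longrightarrow> t \<in> A \<Longrightarrow> w \<preceq> s \<sqinter> t \<longleftrightarrow> w \<preceq> s \<and> w \<preceq> t"
  using is_glb_meet is_glb_iff meet_closed by blast

lemma meet_nat_le_left: "s \<in> A \<Longrightarrow> t \<in> A \<Longrightarrow> s \<sqinter> t \<preceq> s"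
  and meet_nat_le_right: "s \<in> A \<Longrightarrow> t \<in> A \<Longrightarrow> s \<sqinter> t \<preceq> t"
  using is_glb_meet unfolding is_glb_def by blast+

lemma semilattice_on_meet: "semilattice_on A (\<sqinter>)"
  unfolding semilattice_on_def closed_op_def
  by (auto intro!: eq_if_same_lower_bounds simp: meet_closed nat_le_meet_iff)

lemma mult_meet:
  assumes x: "x \<in> A" and y: "y \<in> A" and z: "z \<in> A"
  shows "x \<cdot> (y \<sqinter> z) = x \<cdot> y \<sqinter> z"
proof (rule eq_if_same_lower_bounds)
  have yz: "y \<sqinter> z \<in> A" and xy: "x \<cdot> y \<in> A" using x y z meet_closed closed by blast+
  show xyz: "x \<cdot> (y \<sqinter> z) \<in> A" "x \<cdot> y \<sqinter> z \<in> A" using x yz xy z closed meet_closed by blast+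
  fix w assume w: "w \<in> A"
  show "w \<preceq> x \<cdot> (y \<sqinter> z) \<longleftrightarrow> w \<preceq> x \<cdot> y \<sqinter> z"
  proof
    assume w_le: "w \<preceq> x \<cdot> (y \<sqinter> z)"
    have "x \<cdot> (y \<sqinter> z) \<preceq> x \<cdot> y"
      using mult_left_mono[OF x yz y] meet_nat_le_left[OF y z] by blast
    moreover have "x \<cdot> (y \<sqinter> z) \<preceq> z"
      using nat_le_trans[OF xyz(1) yz z] mult_nat_le_right[OF x yz] meet_nat_le_right[OF y z]
      by blast
    ultimately show "w \<preceq> x \<cdot> y \<sqinter> z"
      using w_le nat_le_trans[OF w xyz(1)] nat_le_meet_iff[OF w xy z] xy z by blast
  next
    assume "w \<preceq> x \<cdot> y \<sqinter> z"
    then have w_xy: "w \<preceq> x \<cdot> y" and w_z: "w \<preceq> z" using nat_le_meet_iff[OF w xy z] by blast+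
    then have "w \<preceq> y" using nat_le_trans[OF w xy y] mult_nat_le_right[OF x y] by blast
    then have "x \<cdot> w \<preceq> x \<cdot> (y \<sqinter> z)"
      using mult_left_mono[OF x w yz] nat_le_meet_iff[OF w y z] w_z by blast
    then show "w \<preceq> x \<cdot> (y \<sqinter> z)" using mult_left_fixes_lower_bound[OF w x y w_xy] by simp
  qed
qed

lemma rnb_with_intersection_meet: "rnb_with_intersection A (\<cdot>) (\<sqinter>)"
proof -
  have "(s \<sqinter> t) \<cdot> s = s \<sqinter> t" if "s \<in> A" "t \<in> A" for s t
    using meet_nat_le_left[OF that] by (rule mult_eq_if_nat_le)
  then show ?thesis
    unfolding rnb_with_intersection_def
    using right_normal_band semilattice_on_meet mult_meet by blast
qed

end

context
  fixes inter :: "'a \<Rightarrow> 'a \<Rightarrow> 'a" (infixl "\<sqinter>" 65)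
  assumes rnb_with_intersection: "rnb_with_intersection A (\<cdot>) (\<sqinter>)"
begin

lemma inter_closed: "x \<in> A \<Longrightarrow> y \<in> A \<Longrightarrow> x \<sqinter> y \<in> A"
  and inter_commute: "x \<in> A \<Longrightarrow> y \<in> A \<Longrightarrow> x \<sqinter> y = y \<sqinter> x"
  and inter_idem: "x \<in> A \<Longrightarrow> x \<sqinter> x = x"
  and inter_mult_left: "x \<in> A \<Longrightarrow> y \<in> A \<Longrightarrow> (x \<sqinter> y) \<cdot> x = x \<sqinter> y"
  and mult_inter: "x \<in> A \<Longrightarrow> y \<in> A \<Longrightarrow> z \<in> A \<Longrightarrow> x \<cdot> (y \<sqinter> z) = x \<cdot> y \<sqinter> z"
  using rnb_with_intersection
  unfolding rnb_with_intersection_def semilattice_on_def closed_op_def by blast+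

lemma inter_eq_left_if_nat_le:
  assumes "w \<in> A" "t \<in> A" "w \<preceq> t"
  shows "w \<sqinter> t = w"
proof -
  have "w \<sqinter> t = w \<cdot> (w \<sqinter> t)" using assms(1,2) mult_inter idem by simp
  also have "\<dots> = w \<cdot> (t \<sqinter> w)" using assms(1,2) inter_commute by simp
  also have "\<dots> = w \<cdot> t \<sqinter> w" using assms(1,2) mult_inter by simp
  also have "\<dots> = w" using assms inter_idem mult_eq_if_nat_le by simp
  finally show ?thesis .
qed

lemma is_glb_inter:
  assumes "s \<in> A" "t \<in> A"
  shows "is_glb A (\<cdot>) (s \<sqinter> t) s t"
  unfolding is_glb_def
proof (intro conjI ballI impI)
  show "s \<sqinter> t \<in> A" using assms inter_closed by blast
  show "s \<sqinter> t \<preceq> s" "s \<sqinter> t \<preceq> t"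
    using assms inter_mult_left inter_commute by (metis nat_le_def)+
  fix w assume "w \<in> A" "w \<preceq> s \<and> w \<preceq> t"
  then show "w \<preceq> s \<sqinter> t"
    using assms mult_inter inter_eq_left_if_nat_le by (metis nat_le_def)
qed

end

end

lemma rnb_with_intersection_iff_glb:
  "rnb_with_intersection A f g \<longleftrightarrow>
    right_normal_band A f \<and> (\<forall>s\<in>A. \<forall>t\<in>A. is_glb A f (g s t) s t)"
proof
  assume inter: "rnb_with_intersection A f g"
  then have rnb: "right_normal_band A f" by (simp add: rnb_with_intersection_def)
  interpret rn_band A f by (rule rn_band.intro) (fact rnb)
  show "right_normal_band A f \<and> (\<forall>s\<in>A. \<forall>t\<in>A. is_glb A f (g s t) s t)"
    using rnb is_glb_inter[OF inter] by blast
next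
  assume glb: "right_normal_band A f \<and> (\<forall>s\<in>A. \<forall>t\<in>A. is_glb A f (g s t) s t)"
  interpret rn_band A f by (rule rn_band.intro) (use glb in blast)
  show "rnb_with_intersection A f g"
    using glb rnb_with_intersection_meet by blast
qed

theorem proposition5p1:
  fixes A :: "'a set" and f g :: "'a \<Rightarrow> 'a \<Rightarrow> 'a"
  shows "(right_normal_band A f \<and> (\<forall>s\<in>A. \<forall>t\<in>A. is_glb A f (g s t) s t)
            \<longrightarrow> rnb_with_intersection A f g)
       \<and> (rnb_with_intersection A f g \<longrightarrow> (\<forall>s\<in>A. \<forall>t\<in>A. is_glb A f (g s t) s t))
       \<and> (closed_op A g \<longrightarrow>
            (rnb_with_intersection A f g \<longleftrightarrow>
              right_normal_band A f \<and>
              (\<forall>x\<in>A. \<forall>y\<in>A. \<forall>z\<in>A. (x = f x y \<and> x = f x z) \<longleftrightarrow> x = f x (g y z))))"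
proof -
  have "(\<forall>s\<in>A. \<forall>t\<in>A. is_glb A f (g s t) s t)
      \<longleftrightarrow> (\<forall>x\<in>A. \<forall>y\<in>A. \<forall>z\<in>A. (x = f x y \<and> x = f x z) \<longleftrightarrow> x = f x (g y z))"
    if "closed_op A g" "right_normal_band A f"
  proof -
    interpret rn_band A f by (rule rn_band.intro) (fact that(2))
    show ?thesis using all_glb_iff_lower_bounds[OF that(1)] unfolding nat_le_def .
  qed
  then show ?thesis using rnb_with_intersection_iff_glb[of A f g] by blast
qed

end
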